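(* Let $x_i\in\mathbb{R}^p$, $i=1,\dots,n$, be random vectors with common second-moment matrix satisfying $\underline\kappa\le\lambda_{\min}(\mathrm{E}[x_ix_i'])\le\lambda_{\max}(\mathrm{E}[x_ix_i'])\le\bar\kappa$, and let $h_i=x_i'\theta_h+\rho_i$ where $\theta_h\in S^a_A(p)$ and $\mathrm{E}[\rho_i^2]$ does not depend on $i$. For $s=A^{1/a}n^{1/(2a)}$ with $a>1$, define $\beta_{h0}\in\arg\min_{\|\beta\|_0\le s}\mathrm{E}[(h_i-x_i'\beta)^2]$ and $r_{hi}=h_i-x_i'\beta_{h0}$, $i=1,\dots,n$. Then $$|r_{hi}|\le\|x_i\|_\infty(\bar\kappa/\underline\kappa)^{3/2}\left\{\frac{2a-1}{a-1}\sqrt{s^2/n}+5\sqrt{s\,\mathrm{E}[\rho_i^2]/\underline\kappa}\right\}+|\rho_i|.$$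
   Context: For constants $a>0$, $A>0$, a coefficient vector $\theta=(\theta_j)$ is "$a$-smooth with constant $A$ after $p$-rearrangement", written $\theta\in S^a_A(p)$, if $|\theta_{(j)}|\le Aj^{-a}$ for $j=1,\dots,p$ (and $|\theta_j|\le Aj^{-a}$ for $j>p$ if $\theta$ has further coordinates), where $|\theta_{(1)}|\ge|\theta_{(2)}|\ge\dots\ge|\theta_{(p)}|$ is the decreasing rearrangement of $|\theta_1|,\dots,|\theta_p|$. Here $\theta_h$ is paired with $x_i\in\mathbb{R}^p$, so it is regarded as a vector in $\mathbb{R}^p$. $\|\beta\|_0$ is the number of nonzero entries and $\|\cdot\|_\infty$ the max-norm; $\lambda_{\min},\lambda_{\max}$ are the smallest and largest eigenvalues. *)

theory Defs
  imports "HOL-Probability.Probability"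
begin

text \<open>Vectors in R^p are represented as functions nat => real; only the coordinates
  0..p-1 are relevant (coordinate j of the paper corresponds to index j-1).\<close>

definition dotp :: "nat \<Rightarrow> (nat \<Rightarrow> real) \<Rightarrow> (nat \<Rightarrow> real) \<Rightarrow> real" where
  "dotp p u v = (\<Sum>j<p. u j * v j)"

definition l0norm :: "nat \<Rightarrow> (nat \<Rightarrow> real) \<Rightarrow> nat" where
  "l0norm p v = card {j. j < p \<and> v j \<noteq> 0}"

definition supnorm :: "nat \<Rightarrow> (nat \<Rightarrow> real) \<Rightarrow> real" where
  "supnorm p v = (if p = 0 then 0 else Max ((\<lambda>j. \<bar>v j\<bar>) ` {..<p}))"

text \<open>Decreasing rearrangement of |theta_1|,...,|theta_p|: element k (0-based)
  is |theta_(k+1)|.\<close>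
definition decr_rearr :: "nat \<Rightarrow> (nat \<Rightarrow> real) \<Rightarrow> real list" where
  "decr_rearr p \<theta> = rev (sort (map (\<lambda>j. \<bar>\<theta> j\<bar>) [0..<p]))"

definition smooth_class :: "real \<Rightarrow> real \<Rightarrow> nat \<Rightarrow> (nat \<Rightarrow> real) set" where
  "smooth_class a A p = {\<theta>. \<forall>k<p. decr_rearr p \<theta> ! k \<le> A * real (k + 1) powr (- a)}"

definition is_eigenvalue :: "nat \<Rightarrow> (nat \<Rightarrow> nat \<Rightarrow> real) \<Rightarrow> real \<Rightarrow> bool" where
  "is_eigenvalue p S \<mu> \<longleftrightarrow>
     (\<exists>v. (\<exists>j<p. v j \<noteq> 0) \<and> (\<forall>j<p. (\<Sum>k<p. S j k * v k) = \<mu> * v j))"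

end

theory Submission
  imports Defs "HOL-Combinatorics.Permutations"
begin

text \<open>Write \<open>\<delta> = \<theta> - \<beta>\<^sub>0\<close>, so that \<open>r\<^sub>i = x\<^sub>i'\<delta> + \<rho>\<^sub>i\<close> and
  \<open>|r\<^sub>i| \<le> \<parallel>x\<^sub>i\<parallel>\<^sub>\<infinity> \<parallel>\<delta>\<parallel>\<^sub>1 + |\<rho>\<^sub>i|\<close>. Let \<open>m = \<lfloor>s\<rfloor>\<close> and let \<open>\<theta>\<^sub>T\<close> keep the \<open>m\<close> largest
  coordinates of \<open>\<theta>\<close>. Since \<open>\<theta>\<^sub>T\<close> is a competitor for \<open>\<beta>\<^sub>0\<close>, and each risk
  \<open>E[(x'v + \<rho>)\<^sup>2]\<close> equals \<open>v'Sv + \<sigma>\<^sup>2\<close> up to the Cauchy--Schwarz error \<open>2\<sigma>\<surd>(v'Sv)\<close>,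
  optimality gives \<open>\<surd>(\<delta>'S\<delta>) \<le> \<surd>(d'Sd) + 2\<sigma>\<close> for the tail \<open>d = \<theta> - \<theta>\<^sub>T\<close>; the eigenvalue
  bounds (a Rayleigh quotient argument) turn this into a bound on \<open>\<parallel>\<delta>\<parallel>\<^sub>2\<close>. Outside the at
  most \<open>2m\<close> indices of \<open>T \<union> supp \<beta>\<^sub>0\<close>, \<open>\<delta>\<close> agrees with the tail of \<open>\<theta>\<close>, and on them
  Cauchy--Schwarz gives \<open>\<parallel>\<delta>\<parallel>\<^sub>1 \<le> \<parallel>d\<parallel>\<^sub>1 + \<surd>(2m) \<parallel>\<delta>\<parallel>\<^sub>2\<close>. Finally the tails of the
  decreasing rearrangement are compared with \<open>\<integral> t\<^sup>-\<^sup>a\<close>, which yields the factor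
  \<open>(2a-1)/(a-1) \<cdot> A(m+1)\<^sup>1\<^sup>-\<^sup>a \<le> (2a-1)/(a-1) \<cdot> \<surd>(s\<^sup>2/n)\<close>.\<close>

definition quad_form :: "nat \<Rightarrow> (nat \<Rightarrow> nat \<Rightarrow> real) \<Rightarrow> (nat \<Rightarrow> real) \<Rightarrow> real" where
  "quad_form p S v = (\<Sum>j<p. \<Sum>k<p. S j k * v j * v k)"

definition sq_norm :: "nat \<Rightarrow> (nat \<Rightarrow> real) \<Rightarrow> real" where
  "sq_norm p v = (\<Sum>j<p. (v j)\<^sup>2)"

lemma sq_norm_nonneg: "sq_norm p v \<ge> 0"
  unfolding sq_norm_def by (simp add: sum_nonneg)

lemma quadratic_nonneg_imp_discriminant_le:
  fixes a b c :: real
  assumes q: "\<And>t. 0 \<le> a * t\<^sup>2 + 2 * b * t + c"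
  shows "b\<^sup>2 \<le> a * c"
proof -
  have a: "a \<ge> 0"
  proof (rule ccontr)
    assume "\<not> a \<ge> 0"
    define t where "t = sqrt ((\<bar>c\<bar> + 1) / - a)"
    have "t\<^sup>2 = (\<bar>c\<bar> + 1) / - a"
      unfolding t_def using \<open>\<not> a \<ge> 0\<close> by (intro real_sqrt_pow2) (simp add: divide_nonneg_neg)
    hence "a * t\<^sup>2 = - (\<bar>c\<bar> + 1)"
      using \<open>\<not> a \<ge> 0\<close> by (simp add: field_simps)
    moreover have "0 \<le> (a * t\<^sup>2 + 2 * b * t + c) + (a * (- t)\<^sup>2 + 2 * b * (- t) + c)"
      using q[of t] q[of "- t"] by linarith
    ultimately show False by simp
  qed
  show ?thesis
  proof (cases "a = 0")
    case True
    show ?thesis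
    proof (cases "b = 0")
      case False
      have "0 \<le> a * (-(\<bar>c\<bar> + 1) / (2 * b))\<^sup>2 + 2 * b * (-(\<bar>c\<bar> + 1) / (2 * b)) + c" by (rule q)
      also have "\<dots> = - (\<bar>c\<bar> + 1) + c" using True False by simp
      finally show ?thesis by simp
    qed (use True in simp)
  next
    case False
    hence ap: "a > 0" using a by simp
    have "0 \<le> a * (- b / a)\<^sup>2 + 2 * b * (- b / a) + c" by (rule q)
    also have "\<dots> = c - b\<^sup>2 / a" using ap by (simp add: power2_eq_square field_simps)
    finally show ?thesis using ap by (simp add: pos_divide_le_eq mult.commute)
  qed
qed

lemma compact_unit_sphere_fun:
  "compact {v::nat\<Rightarrow>real. (\<forall>j\<ge>p. v j = 0) \<and> sq_norm p v = 1}"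
proof -
  define B where "B = PiE UNIV (\<lambda>j. if j<p then {-1..1::real} else {0})"
  have "compactin (product_topology (\<lambda>_. euclidean) UNIV) B"
    unfolding B_def by (subst compactin_PiE) auto
  hence B: "compact B" by (simp add: euclidean_product_topology)
  have "{v::nat\<Rightarrow>real. \<forall>j\<ge>p. v j = 0} = (\<Inter>j\<in>{p..}. {v. v j = 0})" by auto
  moreover have "closed {v::nat\<Rightarrow>real. v j = 0}" for j
    by (rule closed_Collect_eq) (auto intro: continuous_intros)
  ultimately have support: "closed {v::nat\<Rightarrow>real. \<forall>j\<ge>p. v j = 0}" by auto
  have sphere: "closed {v::nat\<Rightarrow>real. sq_norm p v = 1}"
    unfolding sq_norm_def
    by (rule closed_Collect_eq) (auto intro!: continuous_intros continuous_on_compose2[OF continuous_on_product_coordinates])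
  have "{v. (\<forall>j\<ge>p. v j = 0) \<and> sq_norm p v = 1}
      = B \<inter> ({v. \<forall>j\<ge>p. v j = 0} \<inter> {v. sq_norm p v = 1})"
  proof (auto simp: B_def)
    fix v :: "nat \<Rightarrow> real" and j assume "sq_norm p v = 1" and "j < p"
    hence "(v j)\<^sup>2 \<le> 1"
      unfolding sq_norm_def by (metis finite_lessThan lessThan_iff member_le_sum zero_le_power2)
    thus "- 1 \<le> v j" "v j \<le> 1" using abs_square_le_1[of "v j"] by auto
  qed
  thus ?thesis using B support sphere by (simp only:) (intro compact_Int_closed closed_Int)
qed

lemma continuous_on_quad_form: "continuous_on A (quad_form p S)"
proof -
  have "\<And>j. continuous_on A (\<lambda>v::nat\<Rightarrow>real. v j)"
    by (rule continuous_on_subset[OF continuous_on_product_coordinates]) auto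
  hence "continuous_on A (\<lambda>v. \<Sum>j<p. \<Sum>k<p. S j k * v j * v k)"
    by (intro continuous_intros) auto
  thus ?thesis by (simp add: quad_form_def[abs_def])
qed

lemma quad_form_scale: "quad_form p S (\<lambda>j. c * v j) = c\<^sup>2 * quad_form p S v"
  unfolding quad_form_def by (simp add: sum_distrib_left power2_eq_square algebra_simps)

lemma sq_norm_scale: "sq_norm p (\<lambda>j. c * v j) = c\<^sup>2 * sq_norm p v"
  unfolding sq_norm_def by (simp add: sum_distrib_left power2_eq_square algebra_simps)

lemma sum_unit_vector:
  assumes "j < (p::nat)"
  shows "(\<Sum>i<p. (if i = j then 1 else 0) * g i) = (g j :: real)"
proof -
  have "(\<Sum>i<p. (if i = j then 1 else 0) * g i) = (\<Sum>i<p. if i = j then g i else 0)"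
    by (intro sum.cong) auto
  thus ?thesis using assms by simp
qed

lemma quad_form_add_unit_vector:
  assumes sym: "\<forall>j<p. \<forall>k<p. S j k = S k j" and j: "j < p"
  shows "quad_form p S (\<lambda>i. v i + t * (if i = j then 1 else 0))
     = quad_form p S v + 2 * t * (\<Sum>k<p. S j k * v k) + t\<^sup>2 * S j j"
proof -
  define e where "e = (\<lambda>i::nat. if i = j then (1::real) else 0)"
  have e: "(\<Sum>i<p. e i * g i) = g j" for g using sum_unit_vector[OF j] unfolding e_def .
  have "quad_form p S (\<lambda>i. v i + t * e i)
     = quad_form p S v + t * (\<Sum>i<p. \<Sum>k<p. S i k * v i * e k)
       + t * (\<Sum>i<p. \<Sum>k<p. S i k * e i * v k) + t\<^sup>2 * (\<Sum>i<p. \<Sum>k<p. S i k * e i * e k)"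
    unfolding quad_form_def by (simp add: algebra_simps sum.distrib sum_distrib_left power2_eq_square)
  also have "(\<Sum>i<p. \<Sum>k<p. S i k * v i * e k) = (\<Sum>k<p. e k * (\<Sum>i<p. S i k * v i))"
    by (subst sum.swap) (simp add: sum_distrib_left algebra_simps)
  also have "\<dots> = (\<Sum>k<p. S j k * v k)"
    unfolding e using sym j by (intro sum.cong) auto
  also have "(\<Sum>i<p. \<Sum>k<p. S i k * e i * v k) = (\<Sum>i<p. e i * (\<Sum>k<p. S i k * v k))"
    by (simp add: sum_distrib_left algebra_simps)
  also have "\<dots> = (\<Sum>k<p. S j k * v k)" by (rule e)
  also have "(\<Sum>i<p. \<Sum>k<p. S i k * e i * e k) = (\<Sum>i<p. e i * (\<Sum>k<p. e k * S i k))"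
    by (simp add: sum_distrib_left algebra_simps)
  also have "\<dots> = S j j" by (simp add: e)
  finally show ?thesis unfolding e_def by simp
qed

lemma sq_norm_add_unit_vector:
  assumes j: "j < p"
  shows "sq_norm p (\<lambda>i. v i + t * (if i = j then 1 else 0)) = sq_norm p v + 2 * t * v j + t\<^sup>2"
proof -
  define e where "e = (\<lambda>i::nat. if i = j then (1::real) else 0)"
  have e: "(\<Sum>i<p. e i * g i) = g j" for g using sum_unit_vector[OF j] unfolding e_def .
  have ee: "e i * e i = e i" for i by (simp add: e_def)
  have "sq_norm p (\<lambda>i. v i + t * e i)
      = sq_norm p v + 2 * t * (\<Sum>i<p. e i * v i) + t\<^sup>2 * (\<Sum>i<p. e i * 1)"
    unfolding sq_norm_def by (simp add: power2_eq_square algebra_simps sum.distrib sum_distrib_left ee)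
  also have "\<dots> = sq_norm p v + 2 * t * v j + t\<^sup>2" by (simp only: e)
  finally show ?thesis unfolding e_def .
qed

text \<open>The minimum of the Rayleigh quotient is attained on the compact unit sphere; at a minimiser
  every directional derivative vanishes, which is the eigenvalue equation.\<close>
lemma rayleigh_min_eigenvalue:
  assumes p: "p \<ge> 1" and sym: "\<forall>j<p. \<forall>k<p. S j k = S k j"
  obtains \<mu> where "is_eigenvalue p S \<mu>" and "\<And>v. \<mu> * sq_norm p v \<le> quad_form p S v"
proof -
  define C where "C = {v::nat\<Rightarrow>real. (\<forall>j\<ge>p. v j = 0) \<and> sq_norm p v = 1}"
  have "sq_norm p (\<lambda>j. if j = 0 then 1 else 0) = (\<Sum>j<p. if j = 0 then 1 else (0::real))"
    unfolding sq_norm_def by (intro sum.cong) auto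
  also have "\<dots> = 1" using p by simp
  finally have "(\<lambda>j. if j = 0 then 1 else 0) \<in> C" using p by (simp add: C_def)
  hence "C \<noteq> {}" by auto
  then obtain v0 where v0: "v0 \<in> C" and v0_min: "\<forall>y\<in>C. quad_form p S v0 \<le> quad_form p S y"
    using continuous_attains_inf[OF compact_unit_sphere_fun _ continuous_on_quad_form]
    unfolding C_def by blast
  define \<mu> where "\<mu> = quad_form p S v0"
  have v0_norm: "sq_norm p v0 = 1" using v0 by (simp add: C_def)
  have bound: "\<mu> * sq_norm p v \<le> quad_form p S v" for v
  proof (cases "sq_norm p v = 0")
    case True
    hence "\<forall>j\<in>{..<p}. v j = 0" unfolding sq_norm_def by (subst (asm) sum_nonneg_eq_0_iff) auto
    thus ?thesis using True unfolding quad_form_def by simp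
  next
    case False
    hence pos: "sq_norm p v > 0" using sq_norm_nonneg[of p v] by simp
    define c where "c = 1 / sqrt (sq_norm p v)"
    define w where "w = (\<lambda>j. if j < p then c * v j else 0)"
    have c2: "c\<^sup>2 = 1 / sq_norm p v" unfolding c_def using pos by (simp add: power_divide)
    have "quad_form p S w = quad_form p S (\<lambda>j. c * v j)"
      unfolding quad_form_def w_def by (intro sum.cong) auto
    hence Qw: "quad_form p S w = quad_form p S v / sq_norm p v" by (simp add: quad_form_scale c2)
    have "sq_norm p w = sq_norm p (\<lambda>j. c * v j)"
      unfolding sq_norm_def w_def by (intro sum.cong) auto
    hence "w \<in> C" using c2 pos by (simp add: C_def w_def sq_norm_scale)
    hence "\<mu> \<le> quad_form p S v / sq_norm p v" using v0_min Qw \<mu>_def by auto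
    thus ?thesis using pos by (simp add: pos_le_divide_eq mult.commute)
  qed
  have "(\<Sum>k<p. S j k * v0 k) = \<mu> * v0 j" if j: "j < p" for j
  proof -
    have "0 \<le> (S j j - \<mu>) * t\<^sup>2 + 2 * ((\<Sum>k<p. S j k * v0 k) - \<mu> * v0 j) * t + 0" for t
      using bound[of "\<lambda>i. v0 i + t * (if i = j then 1 else 0)"]
      unfolding quad_form_add_unit_vector[OF sym j] sq_norm_add_unit_vector[OF j] v0_norm \<mu>_def[symmetric]
      by (simp add: algebra_simps)
    from quadratic_nonneg_imp_discriminant_le[OF this] show ?thesis by simp
  qed
  moreover have "\<exists>j<p. v0 j \<noteq> 0"
  proof (rule ccontr)
    assume "\<not> ?thesis"
    hence "sq_norm p v0 = 0" unfolding sq_norm_def by simp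
    thus False using v0_norm by simp
  qed
  ultimately show ?thesis using that bound unfolding is_eigenvalue_def by blast
qed

lemma rayleigh_bounds:
  assumes p: "p \<ge> 1" and sym: "\<forall>j<p. \<forall>k<p. S j k = S k j"
    and ev: "\<forall>\<mu>. is_eigenvalue p S \<mu> \<longrightarrow> kl \<le> \<mu> \<and> \<mu> \<le> ku"
  shows "kl * sq_norm p v \<le> quad_form p S v" and "quad_form p S v \<le> ku * sq_norm p v"
    and "kl \<le> ku"
proof -
  obtain \<mu> where e1: "is_eigenvalue p S \<mu>" and b1: "\<And>v. \<mu> * sq_norm p v \<le> quad_form p S v"
    using rayleigh_min_eigenvalue[OF p sym] by blast
  have "\<forall>j<p. \<forall>k<p. - S j k = - S k j" using sym by simp
  then obtain \<nu> where e2: "is_eigenvalue p (\<lambda>j k. - S j k) \<nu>"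
    and b2: "\<And>v. \<nu> * sq_norm p v \<le> quad_form p (\<lambda>j k. - S j k) v"
    by (rule rayleigh_min_eigenvalue[OF p]) blast
  have "is_eigenvalue p S (- \<nu>)"
  proof -
    obtain w where "\<exists>j<p. w j \<noteq> 0" "\<forall>j<p. (\<Sum>k<p. - S j k * w k) = \<nu> * w j"
      using e2 unfolding is_eigenvalue_def by blast
    moreover have "(\<Sum>k<p. - S j k * w k) = - (\<Sum>k<p. S j k * w k)" for j by (simp add: sum_negf)
    ultimately show ?thesis unfolding is_eigenvalue_def by (intro exI[of _ w]) auto
  qed
  hence kl_mu: "kl \<le> \<mu>" and mu_ku: "\<mu> \<le> ku" and nu_ku: "- \<nu> \<le> ku"
    using ev e1 by blast+
  have "quad_form p (\<lambda>j k. - S j k) v = - quad_form p S v"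
    unfolding quad_form_def by (simp add: sum_negf)
  thus "quad_form p S v \<le> ku * sq_norm p v"
    using mult_right_mono[OF nu_ku sq_norm_nonneg, of p v] b2[of v] by simp
  show "kl * sq_norm p v \<le> quad_form p S v"
    using mult_right_mono[OF kl_mu sq_norm_nonneg] b1 by (rule order_trans)
  show "kl \<le> ku" using kl_mu mu_ku by (rule order_trans)
qed

lemma integrable_mult_of_square_integrable:
  fixes f g :: "'a \<Rightarrow> real"
  assumes "f \<in> borel_measurable M" "g \<in> borel_measurable M"
    and "integrable M (\<lambda>x. (f x)\<^sup>2)" "integrable M (\<lambda>x. (g x)\<^sup>2)"
  shows "integrable M (\<lambda>x. f x * g x)"
proof (rule Bochner_Integration.integrable_bound)
  show "integrable M (\<lambda>x. (f x)\<^sup>2 + (g x)\<^sup>2)" using assms(3,4) by (rule Bochner_Integration.integrable_add)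
  show "(\<lambda>x. f x * g x) \<in> borel_measurable M" using assms(1,2) by (rule borel_measurable_times)
  have "\<bar>f x * g x\<bar> \<le> (f x)\<^sup>2 + (g x)\<^sup>2" for x
    using sum_squares_bound[of "\<bar>f x\<bar>" "\<bar>g x\<bar>"] abs_ge_zero[of "f x * g x"]
    unfolding abs_mult power2_abs by linarith
  thus "AE x in M. norm (f x * g x) \<le> norm ((f x)\<^sup>2 + (g x)\<^sup>2)" by simp
qed

lemma integral_dotp_square:
  fixes X :: "'a \<Rightarrow> nat \<Rightarrow> real"
  assumes X: "\<forall>j<p. (\<lambda>\<omega>. X \<omega> j) \<in> borel_measurable M \<and> integrable M (\<lambda>\<omega>. (X \<omega> j)\<^sup>2)"
    and S: "\<forall>j<p. \<forall>k<p. S j k = (\<integral>\<omega>. X \<omega> j * X \<omega> k \<partial>M)"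
  shows "integrable M (\<lambda>\<omega>. (dotp p (X \<omega>) v)\<^sup>2)"
    and "(\<integral>\<omega>. (dotp p (X \<omega>) v)\<^sup>2 \<partial>M) = quad_form p S v"
proof -
  have sq: "(dotp p (X \<omega>) v)\<^sup>2 = (\<Sum>j<p. \<Sum>k<p. v j * v k * (X \<omega> j * X \<omega> k))" for \<omega>
    unfolding dotp_def power2_eq_square sum_product by (simp add: algebra_simps)
  have XX: "integrable M (\<lambda>\<omega>. X \<omega> j * X \<omega> k)" if "j < p" "k < p" for j k
    using X that by (intro integrable_mult_of_square_integrable) auto
  show "integrable M (\<lambda>\<omega>. (dotp p (X \<omega>) v)\<^sup>2)"
    unfolding sq using XX by (intro Bochner_Integration.integrable_sum Bochner_Integration.integrable_mult_right) auto
  have inner: "integrable M (\<lambda>\<omega>. \<Sum>k<p. v j * v k * (X \<omega> j * X \<omega> k))" if "j < p" for j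
    using XX that by (intro Bochner_Integration.integrable_sum Bochner_Integration.integrable_mult_right) auto
  have "(\<integral>\<omega>. (dotp p (X \<omega>) v)\<^sup>2 \<partial>M) = (\<Sum>j<p. \<integral>\<omega>. (\<Sum>k<p. v j * v k * (X \<omega> j * X \<omega> k)) \<partial>M)"
    unfolding sq
    by (rule Bochner_Integration.integral_sum[of "{..<p}" M "\<lambda>j \<omega>. \<Sum>k<p. v j * v k * (X \<omega> j * X \<omega> k)"])
      (use inner in auto)
  also have "\<dots> = (\<Sum>j<p. \<Sum>k<p. v j * v k * (\<integral>\<omega>. X \<omega> j * X \<omega> k \<partial>M))"
  proof (intro sum.cong refl)
    fix j assume "j \<in> {..<p}"
    thus "(\<integral>\<omega>. (\<Sum>k<p. v j * v k * (X \<omega> j * X \<omega> k)) \<partial>M)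
        = (\<Sum>k<p. v j * v k * (\<integral>\<omega>. X \<omega> j * X \<omega> k \<partial>M))"
      using XX by (subst Bochner_Integration.integral_sum) auto
  qed
  also have "\<dots> = quad_form p S v" unfolding quad_form_def using S by (intro sum.cong refl) (simp add: algebra_simps)
  finally show "(\<integral>\<omega>. (dotp p (X \<omega>) v)\<^sup>2 \<partial>M) = quad_form p S v" .
qed

text \<open>Cauchy--Schwarz in \<open>L\<^sup>2\<close>, via the discriminant of \<open>t \<mapsto> E[(t x'v + R)\<^sup>2]\<close>.\<close>
lemma expected_sq_error_bound:
  fixes X :: "'a \<Rightarrow> nat \<Rightarrow> real" and R :: "'a \<Rightarrow> real"
  assumes X: "\<forall>j<p. (\<lambda>\<omega>. X \<omega> j) \<in> borel_measurable M \<and> integrable M (\<lambda>\<omega>. (X \<omega> j)\<^sup>2)"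
    and R: "R \<in> borel_measurable M" "integrable M (\<lambda>\<omega>. (R \<omega>)\<^sup>2)"
    and S: "\<forall>j<p. \<forall>k<p. S j k = (\<integral>\<omega>. X \<omega> j * X \<omega> k \<partial>M)"
  shows "\<bar>(\<integral>\<omega>. (dotp p (X \<omega>) v + R \<omega>)\<^sup>2 \<partial>M) - (quad_form p S v + (\<integral>\<omega>. (R \<omega>)\<^sup>2 \<partial>M))\<bar>
           \<le> 2 * sqrt (quad_form p S v) * sqrt (\<integral>\<omega>. (R \<omega>)\<^sup>2 \<partial>M)"
proof -
  define Xv where "Xv = (\<lambda>\<omega>. dotp p (X \<omega>) v)"
  define a where "a = quad_form p S v"
  define b where "b = (\<integral>\<omega>. Xv \<omega> * R \<omega> \<partial>M)"
  define c where "c = (\<integral>\<omega>. (R \<omega>)\<^sup>2 \<partial>M)"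
  have Xv2: "integrable M (\<lambda>\<omega>. (Xv \<omega>)\<^sup>2)" and a: "a = (\<integral>\<omega>. (Xv \<omega>)\<^sup>2 \<partial>M)"
    unfolding Xv_def a_def using integral_dotp_square[OF X S] by auto
  have "Xv \<in> borel_measurable M"
    unfolding Xv_def dotp_def using X by (intro borel_measurable_sum borel_measurable_times) auto
  hence XvR: "integrable M (\<lambda>\<omega>. Xv \<omega> * R \<omega>)"
    using Xv2 R by (intro integrable_mult_of_square_integrable)
  have expand: "(\<integral>\<omega>. (t * Xv \<omega> + R \<omega>)\<^sup>2 \<partial>M) = a * t\<^sup>2 + 2 * b * t + c" for t
  proof -
    have sq: "(t * Xv \<omega> + R \<omega>)\<^sup>2 = t\<^sup>2 * (Xv \<omega>)\<^sup>2 + (2 * t) * (Xv \<omega> * R \<omega>) + (R \<omega>)\<^sup>2" for \<omega>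
      by (simp add: power2_eq_square algebra_simps)
    have i1: "integrable M (\<lambda>\<omega>. t\<^sup>2 * (Xv \<omega>)\<^sup>2)" using Xv2 by simp
    have i2: "integrable M (\<lambda>\<omega>. (2 * t) * (Xv \<omega> * R \<omega>))" using XvR by simp
    have "(\<integral>\<omega>. (t * Xv \<omega> + R \<omega>)\<^sup>2 \<partial>M)
       = (\<integral>\<omega>. t\<^sup>2 * (Xv \<omega>)\<^sup>2 + (2 * t) * (Xv \<omega> * R \<omega>) \<partial>M) + c"
      unfolding sq c_def
      by (rule Bochner_Integration.integral_add[OF Bochner_Integration.integrable_add[OF i1 i2] R(2)])
    also have "(\<integral>\<omega>. t\<^sup>2 * (Xv \<omega>)\<^sup>2 + (2 * t) * (Xv \<omega> * R \<omega>) \<partial>M)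
       = (\<integral>\<omega>. t\<^sup>2 * (Xv \<omega>)\<^sup>2 \<partial>M) + (\<integral>\<omega>. (2 * t) * (Xv \<omega> * R \<omega>) \<partial>M)"
      by (rule Bochner_Integration.integral_add[OF i1 i2])
    finally show ?thesis unfolding a b_def integral_mult_right_zero by (simp add: algebra_simps)
  qed
  have "b\<^sup>2 \<le> a * c"
    by (rule quadratic_nonneg_imp_discriminant_le) (simp only: expand[symmetric] integral_nonneg_AE zero_le_power2 AE_I2)
  hence "\<bar>b\<bar> \<le> sqrt a * sqrt c" by (metis real_sqrt_abs real_sqrt_le_mono real_sqrt_mult)
  moreover have "(\<integral>\<omega>. (dotp p (X \<omega>) v + R \<omega>)\<^sup>2 \<partial>M) = a + 2 * b + c"
    using expand[of 1] unfolding Xv_def by simp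
  ultimately show ?thesis unfolding a_def c_def by simp
qed

lemma sqrt_quad_form_le_of_risk_le:
  fixes x :: "nat \<Rightarrow> 'a \<Rightarrow> nat \<Rightarrow> real" and rho :: "nat \<Rightarrow> 'a \<Rightarrow> real"
  assumes I: "finite I" "I \<noteq> {}"
    and x: "\<forall>i\<in>I. \<forall>j<p. (\<lambda>\<omega>. x i \<omega> j) \<in> borel_measurable M \<and> integrable M (\<lambda>\<omega>. (x i \<omega> j)\<^sup>2)"
    and rho: "\<forall>i\<in>I. rho i \<in> borel_measurable M \<and> integrable M (\<lambda>\<omega>. (rho i \<omega>)\<^sup>2)"
    and S: "\<forall>i\<in>I. \<forall>j<p. \<forall>k<p. S j k = (\<integral>\<omega>. x i \<omega> j * x i \<omega> k \<partial>M)"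
    and \<sigma>: "\<sigma> \<ge> 0" "\<forall>i\<in>I. (\<integral>\<omega>. (rho i \<omega>)\<^sup>2 \<partial>M) = \<sigma>\<^sup>2"
    and Q: "quad_form p S u \<ge> 0" "quad_form p S w \<ge> 0"
    and risk: "(\<Sum>i\<in>I. \<integral>\<omega>. (dotp p (x i \<omega>) u + rho i \<omega>)\<^sup>2 \<partial>M)
      \<le> (\<Sum>i\<in>I. \<integral>\<omega>. (dotp p (x i \<omega>) w + rho i \<omega>)\<^sup>2 \<partial>M)"
  shows "sqrt (quad_form p S u) \<le> sqrt (quad_form p S w) + 2 * \<sigma>"
proof -
  define E where "E = (\<lambda>i v. \<integral>\<omega>. (dotp p (x i \<omega>) v + rho i \<omega>)\<^sup>2 \<partial>M)"
  have E: "\<bar>E i v - (quad_form p S v + \<sigma>\<^sup>2)\<bar> \<le> 2 * sqrt (quad_form p S v) * \<sigma>" if "i \<in> I" for i v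
    using expected_sq_error_bound[of p "x i" M "rho i" S v] x rho S \<sigma> that unfolding E_def by simp
  have "real (card I) * ((sqrt (quad_form p S u))\<^sup>2 - 2 * sqrt (quad_form p S u) * \<sigma> + \<sigma>\<^sup>2)
      \<le> (\<Sum>i\<in>I. E i u)"
    using E[of _ u] Q(1) by (subst sum_constant[symmetric], intro sum_mono) (force simp: abs_le_iff)
  also have "\<dots> \<le> (\<Sum>i\<in>I. E i w)" using risk unfolding E_def .
  also have "\<dots> \<le> real (card I) * ((sqrt (quad_form p S w))\<^sup>2 + 2 * sqrt (quad_form p S w) * \<sigma> + \<sigma>\<^sup>2)"
    using E[of _ w] Q(2) by (subst sum_constant[symmetric], intro sum_mono) (force simp: abs_le_iff)
  finally have "(sqrt (quad_form p S u))\<^sup>2 - 2 * sqrt (quad_form p S u) * \<sigma> + \<sigma>\<^sup>2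
      \<le> (sqrt (quad_form p S w))\<^sup>2 + 2 * sqrt (quad_form p S w) * \<sigma> + \<sigma>\<^sup>2"
    using I by (subst (asm) mult_le_cancel_left_pos) (auto simp: card_gt_0_iff)
  hence "(sqrt (quad_form p S u) - \<sigma>)\<^sup>2 \<le> (sqrt (quad_form p S w) + \<sigma>)\<^sup>2"
    by (simp only: power2_diff power2_sum)
  hence "sqrt (quad_form p S u) - \<sigma> \<le> sqrt (quad_form p S w) + \<sigma>"
    by (rule power2_le_imp_le) (use \<sigma>(1) Q(2) in simp)
  thus ?thesis by linarith
qed

lemma powr_neg_le_diff_powr:
  fixes b y :: real
  assumes b: "b > 1" and y: "y > 0"
  shows "(b - 1) * (y + 1) powr (- b) \<le> y powr (1 - b) - (y + 1) powr (1 - b)"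
proof -
  have "DERIV (\<lambda>x. x powr (1 - b)) x :> (1 - b) * x powr (- b)" if "y \<le> x" for x
    using DERIV_fun_powr[OF DERIV_ident, of x "1 - b"] that y by simp
  then obtain z where z: "y < z" "z < y + 1"
    and eq: "(y + 1) powr (1 - b) - y powr (1 - b) = (y + 1 - y) * ((1 - b) * z powr (- b))"
    using MVT2[of y "y + 1" "\<lambda>x. x powr (1 - b)" "\<lambda>x. (1 - b) * x powr (- b)"] by auto
  have "(y + 1) powr (- b) \<le> z powr (- b)"
    using z y b by (intro powr_mono2') auto
  hence "(b - 1) * (y + 1) powr (- b) \<le> (b - 1) * z powr (- b)"
    using b by (intro mult_left_mono) auto
  also have "\<dots> = y powr (1 - b) - (y + 1) powr (1 - b)" using eq by (simp add: algebra_simps)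
  finally show ?thesis .
qed

lemma sum_powr_tail_le:
  fixes b :: real
  assumes b: "b > 1"
  shows "(\<Sum>k\<in>{m..<N}. (real k + 1) powr (- b))
     \<le> (real m + 1) powr (- b) + (real m + 1) powr (1 - b) / (b - 1)"
proof (cases "N \<ge> Suc m")
  case True
  have "(\<Sum>k\<in>{m..<N}. (real k + 1) powr (- b))
     \<le> (real m + 1) powr (- b) + ((real m + 1) powr (1 - b) - real N powr (1 - b)) / (b - 1)"
    using True
  proof (induction N rule: dec_induct)
    case base
    then show ?case by (simp add: add.commute)
  next
    case (step N)
    have "(real N + 1) powr (- b) \<le> (real N powr (1 - b) - (real N + 1) powr (1 - b)) / (b - 1)"
      using powr_neg_le_diff_powr[OF b, of "real N"] step.hyps b by (simp add: pos_le_divide_eq mult.commute)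
    with step.IH step.hyps show ?case by (simp add: diff_divide_distrib add.commute)
  qed
  also have "\<dots> \<le> (real m + 1) powr (- b) + (real m + 1) powr (1 - b) / (b - 1)"
    using b by (intro add_left_mono divide_right_mono) auto
  finally show ?thesis .
qed (use b in \<open>simp add: add_nonneg_nonneg\<close>)

text \<open>Take for \<open>T\<close> the indices of the \<open>m\<close> largest \<open>|\<theta>\<^sub>j|\<close>: the remaining ones are the
  entries \<open>k \<ge> m\<close> of the decreasing rearrangement.\<close>
lemma smooth_class_tail_sums:
  assumes "\<theta> \<in> smooth_class a A p"
  obtains T where "T \<subseteq> {..<p}" and "card T \<le> m"
    and "(\<Sum>j\<in>{..<p}-T. \<bar>\<theta> j\<bar>) \<le> (\<Sum>k\<in>{m..<p}. A * (real k + 1) powr (- a))"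
    and "(\<Sum>j\<in>{..<p}-T. (\<theta> j)\<^sup>2) \<le> (\<Sum>k\<in>{m..<p}. (A * (real k + 1) powr (- a))\<^sup>2)"
proof -
  define g where "g = (\<lambda>j. \<bar>\<theta> j\<bar>)"
  have "mset (decr_rearr p \<theta>) = mset (map g [0..<p])" by (simp add: decr_rearr_def g_def)
  then obtain f where f_len: "f permutes {..<length (map g [0..<p])}"
    and f_rearr: "permute_list f (map g [0..<p]) = decr_rearr p \<theta>"
    using mset_eq_permutation by blast
  hence f: "f permutes {..<p}" by simp
  have bound: "\<bar>\<theta> (f k)\<bar> \<le> A * (real k + 1) powr (- a)" if "k < p" for k
  proof -
    have "decr_rearr p \<theta> ! k = map g [0..<p] ! f k"
      using permute_list_nth[OF f_len, of k] f_rearr that by simp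
    also have "\<dots> = \<bar>\<theta> (f k)\<bar>" using permutes_in_image[OF f, of k] that by (simp add: g_def)
    finally have "decr_rearr p \<theta> ! k = \<bar>\<theta> (f k)\<bar>" .
    moreover have "decr_rearr p \<theta> ! k \<le> A * real (k + 1) powr (- a)"
      using assms that unfolding smooth_class_def by blast
    ultimately show ?thesis by (simp add: add.commute)
  qed
  define T where "T = f ` {..<min m p}"
  have inj: "inj_on f {m..<p}" using permutes_inj[OF f] by (simp add: inj_on_def inj_def)
  have "T \<subseteq> {..<p}" unfolding T_def using image_mono[of "{..<min m p}" "{..<p}" f] permutes_image[OF f] by auto
  moreover have "card T \<le> m" unfolding T_def using card_image_le[of "{..<min m p}" f] by simp
  moreover have rest: "{..<p} - T = f ` {m..<p}"
  proof -
    have "{..<p} - T = f ` {..<p} - f ` {..<min m p}" unfolding T_def using permutes_image[OF f] by simp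
    also have "\<dots> = f ` ({..<p} - {..<min m p})" by (rule image_set_diff[OF permutes_inj[OF f], symmetric])
    also have "{..<p} - {..<min m p} = {m..<p}" by auto
    finally show ?thesis .
  qed
  moreover have "(\<Sum>j\<in>{..<p}-T. \<bar>\<theta> j\<bar>) \<le> (\<Sum>k\<in>{m..<p}. A * (real k + 1) powr (- a))"
    unfolding rest sum.reindex[OF inj] by (intro sum_mono) (simp add: bound)
  moreover have "(\<Sum>j\<in>{..<p}-T. (\<theta> j)\<^sup>2) \<le> (\<Sum>k\<in>{m..<p}. (A * (real k + 1) powr (- a))\<^sup>2)"
  proof -
    have "(\<theta> (f k))\<^sup>2 \<le> (A * (real k + 1) powr (- a))\<^sup>2" if "k \<in> {m..<p}" for k
      using power_mono[OF bound[of k], of 2] that by simp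
    thus ?thesis unfolding rest sum.reindex[OF inj] by (intro sum_mono) simp
  qed
  ultimately show ?thesis using that by blast
qed

lemma tail_l1_plus_sqrt_l2_le:
  fixes a W D1 D2 :: real and m :: nat
  assumes a: "a > 1" and W: "W \<ge> 0"
    and D1: "D1 \<le> W / (real m + 1) + W / (a - 1)"
    and D2: "D2 \<le> W\<^sup>2 / (real m + 1)\<^sup>2 + W\<^sup>2 / ((real m + 1) * (2 * a - 1))"
  shows "D1 + sqrt (2 * real m) * sqrt D2 \<le> (2 * a - 1) / (a - 1) * W"
proof -
  have ratio: "(2 * a - 1) / (a - 1) * W = 2 * W + W / (a - 1)" using a by (simp add: field_simps)
  show ?thesis
  proof (cases "m = 0")
    case True
    thus ?thesis using D1 W unfolding ratio by simp
  next
    case False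
    define u where "u = real m + 1"
    have u: "u \<ge> 2" using False unfolding u_def by simp
    have "W\<^sup>2 / (u * (2 * a - 1)) \<le> W\<^sup>2 / u"
      using a u by (intro divide_left_mono) (auto simp: mult_le_cancel_left1)
    hence "2 * real m * D2 \<le> 2 * real m * (W\<^sup>2 / u\<^sup>2 + W\<^sup>2 / u)"
      using D2 unfolding u_def[symmetric] by (intro mult_left_mono) auto
    also have "\<dots> = W\<^sup>2 * (2 - 2 / u\<^sup>2)"
    proof -
      have m: "real m = u - 1" by (simp add: u_def)
      show ?thesis unfolding m using u by (simp add: field_simps power2_eq_square)
    qed
    also have "\<dots> \<le> W\<^sup>2 * 2" using u by (intro mult_left_mono) auto
    also have "\<dots> = (W * sqrt 2)\<^sup>2" by (simp add: power_mult_distrib)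
    finally have "sqrt (2 * real m * D2) \<le> sqrt ((W * sqrt 2)\<^sup>2)" by (rule real_sqrt_le_mono)
    hence "sqrt (2 * real m) * sqrt D2 \<le> W * sqrt 2" using W by (simp add: real_sqrt_mult)
    moreover have "W * sqrt 2 \<le> W * (3 / 2)"
      using W by (intro mult_left_mono real_le_lsqrt) (auto simp: power2_eq_square)
    moreover have "W / u \<le> W / 2" using W u by (intro divide_left_mono) auto
    moreover have "D1 \<le> W / u + W / (a - 1)" using D1 by (simp add: u_def)
    ultimately show ?thesis unfolding ratio by linarith
  qed
qed

lemma smooth_class_sparse_approx:
  assumes \<theta>: "\<theta> \<in> smooth_class a A p" and a: "a > 1" and A: "A > 0"
  obtains T where "T \<subseteq> {..<p}" and "card T \<le> m"
    and "(\<Sum>j\<in>{..<p}-T. \<bar>\<theta> j\<bar>) + sqrt (2 * real m) * sqrt (\<Sum>j\<in>{..<p}-T. (\<theta> j)\<^sup>2)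
         \<le> (2 * a - 1) / (a - 1) * (A * (real m + 1) powr (1 - a))"
proof -
  obtain T where T: "T \<subseteq> {..<p}" "card T \<le> m"
    and l1: "(\<Sum>j\<in>{..<p}-T. \<bar>\<theta> j\<bar>) \<le> (\<Sum>k\<in>{m..<p}. A * (real k + 1) powr (- a))"
    and l2: "(\<Sum>j\<in>{..<p}-T. (\<theta> j)\<^sup>2) \<le> (\<Sum>k\<in>{m..<p}. (A * (real k + 1) powr (- a))\<^sup>2)"
    by (rule smooth_class_tail_sums[OF \<theta>, of m])
  define u where "u = real m + 1"
  define W where "W = A * u powr (1 - a)"
  have u: "u > 0" unfolding u_def by simp
  have u1: "u powr (1 - a) = u powr (- a) * u" and u2: "u powr (1 - 2 * a) = u powr (- 2 * a) * u"
    using powr_add[of u "- a" 1] powr_add[of u "- 2 * a" 1] u by simp_all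
  have "(u powr (- a))\<^sup>2 = u powr (- 2 * a)"
    unfolding power2_eq_square powr_add[symmetric] by simp
  hence W2: "W\<^sup>2 = A\<^sup>2 * u powr (- 2 * a) * u\<^sup>2"
    unfolding W_def u1 by (simp add: power_mult_distrib)
  have "(\<Sum>j\<in>{..<p}-T. \<bar>\<theta> j\<bar>) \<le> A * (\<Sum>k\<in>{m..<p}. (real k + 1) powr (- a))"
    using l1 by (simp add: sum_distrib_left)
  also have "\<dots> \<le> A * (u powr (- a) + u powr (1 - a) / (a - 1))"
    using A sum_powr_tail_le[OF a, of m p] unfolding u_def by (intro mult_left_mono) auto
  also have "\<dots> = W / u + W / (a - 1)"
    using u unfolding W_def u1 by (simp add: field_simps)
  finally have D1: "(\<Sum>j\<in>{..<p}-T. \<bar>\<theta> j\<bar>) \<le> W / (real m + 1) + W / (a - 1)" unfolding u_def .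
  have sq: "(A * (real k + 1) powr (- a))\<^sup>2 = A\<^sup>2 * (real k + 1) powr (- 2 * a)" for k
    unfolding power_mult_distrib power2_eq_square[of "_ powr _"] powr_add[symmetric] by simp
  have "(\<Sum>j\<in>{..<p}-T. (\<theta> j)\<^sup>2) \<le> A\<^sup>2 * (\<Sum>k\<in>{m..<p}. (real k + 1) powr (- (2 * a)))"
    using l2 unfolding sq by (simp add: sum_distrib_left)
  also have "\<dots> \<le> A\<^sup>2 * (u powr (- (2 * a)) + u powr (1 - 2 * a) / (2 * a - 1))"
    using a sum_powr_tail_le[of "2 * a" m p] unfolding u_def by (intro mult_left_mono) auto
  also have "\<dots> = W\<^sup>2 / u\<^sup>2 + W\<^sup>2 / (u * (2 * a - 1))"
    using u a unfolding W2 u2 by (simp add: field_simps power2_eq_square)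
  finally have D2: "(\<Sum>j\<in>{..<p}-T. (\<theta> j)\<^sup>2) \<le> W\<^sup>2 / (real m + 1)\<^sup>2 + W\<^sup>2 / ((real m + 1) * (2 * a - 1))"
    unfolding u_def .
  have "W \<ge> 0" using A by (simp add: W_def)
  from tail_l1_plus_sqrt_l2_le[OF a this D1 D2]
  have "(\<Sum>j\<in>{..<p}-T. \<bar>\<theta> j\<bar>) + sqrt (2 * real m) * sqrt (\<Sum>j\<in>{..<p}-T. (\<theta> j)\<^sup>2)
      \<le> (2 * a - 1) / (a - 1) * (A * (real m + 1) powr (1 - a))"
    by (simp only: W_def u_def)
  with T show ?thesis by (rule that)
qed

lemma l1_dist_le_tail_plus_l2:
  assumes T: "T \<subseteq> {..<p}" "card T \<le> m" and \<beta>: "card {j. j < p \<and> \<beta> j \<noteq> 0} \<le> m"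
  shows "(\<Sum>j<p. \<bar>\<theta> j - \<beta> j\<bar>)
    \<le> (\<Sum>j\<in>{..<p}-T. \<bar>\<theta> j\<bar>) + sqrt (2 * real m) * sqrt (sq_norm p (\<lambda>j. \<theta> j - \<beta> j))"
proof -
  define U where "U = T \<union> {j. j < p \<and> \<beta> j \<noteq> 0}"
  have U: "U \<subseteq> {..<p}" unfolding U_def using T by auto
  have "card U \<le> 2 * m"
    using card_Un_le[of T "{j. j < p \<and> \<beta> j \<noteq> 0}"] T \<beta> unfolding U_def by linarith
  hence "(\<Sum>j\<in>U. (1::real)\<^sup>2) \<le> 2 * real m" by simp
  moreover have "(\<Sum>j\<in>U. \<bar>\<theta> j - \<beta> j\<bar>\<^sup>2) \<le> sq_norm p (\<lambda>j. \<theta> j - \<beta> j)"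
    unfolding sq_norm_def power2_abs using U by (intro sum_mono2) auto
  ultimately have "(\<Sum>j\<in>U. (1::real)\<^sup>2) * (\<Sum>j\<in>U. \<bar>\<theta> j - \<beta> j\<bar>\<^sup>2)
      \<le> (2 * real m) * sq_norm p (\<lambda>j. \<theta> j - \<beta> j)"
    by (intro mult_mono) (auto intro: sum_nonneg)
  with Cauchy_Schwarz_ineq_sum[of "\<lambda>_. 1" "\<lambda>j. \<bar>\<theta> j - \<beta> j\<bar>" U]
  have "(\<Sum>j\<in>U. \<bar>\<theta> j - \<beta> j\<bar>)\<^sup>2 \<le> (2 * real m) * sq_norm p (\<lambda>j. \<theta> j - \<beta> j)" by simp
  hence "sqrt ((\<Sum>j\<in>U. \<bar>\<theta> j - \<beta> j\<bar>)\<^sup>2) \<le> sqrt ((2 * real m) * sq_norm p (\<lambda>j. \<theta> j - \<beta> j))"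
    by (intro real_sqrt_le_mono) simp
  hence inner: "(\<Sum>j\<in>U. \<bar>\<theta> j - \<beta> j\<bar>) \<le> sqrt (2 * real m) * sqrt (sq_norm p (\<lambda>j. \<theta> j - \<beta> j))"
    by (simp add: real_sqrt_mult sum_nonneg)
  have "(\<Sum>j\<in>{..<p}-U. \<bar>\<theta> j - \<beta> j\<bar>) = (\<Sum>j\<in>{..<p}-U. \<bar>\<theta> j\<bar>)"
    by (intro sum.cong) (auto simp: U_def)
  also have "\<dots> \<le> (\<Sum>j\<in>{..<p}-T. \<bar>\<theta> j\<bar>)"
    by (intro sum_mono2) (auto simp: U_def)
  finally have outer: "(\<Sum>j\<in>{..<p}-U. \<bar>\<theta> j - \<beta> j\<bar>) \<le> (\<Sum>j\<in>{..<p}-T. \<bar>\<theta> j\<bar>)" .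
  have "(\<Sum>j<p. \<bar>\<theta> j - \<beta> j\<bar>) = (\<Sum>j\<in>U. \<bar>\<theta> j - \<beta> j\<bar>) + (\<Sum>j\<in>{..<p}-U. \<bar>\<theta> j - \<beta> j\<bar>)"
    using U by (metis add.commute finite_lessThan sum.subset_diff)
  thus ?thesis using inner outer by linarith
qed

lemma dotp_diff: "dotp p u v - dotp p u w = dotp p u (\<lambda>j. v j - w j)"
  unfolding dotp_def by (simp add: sum_subtractf algebra_simps)

lemma abs_dotp_le_supnorm: "\<bar>dotp p u v\<bar> \<le> supnorm p u * (\<Sum>j<p. \<bar>v j\<bar>)"
proof (cases "p = 0")
  case False
  have "\<bar>u j\<bar> \<le> supnorm p u" if "j < p" for j
    unfolding supnorm_def using False that by (auto intro: Max_ge)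
  hence "(\<Sum>j<p. \<bar>u j * v j\<bar>) \<le> (\<Sum>j<p. supnorm p u * \<bar>v j\<bar>)"
    by (intro sum_mono) (auto simp: abs_mult intro: mult_right_mono)
  with sum_abs[of "\<lambda>j. u j * v j" "{..<p}"] show ?thesis
    unfolding dotp_def sum_distrib_left[symmetric] by linarith
qed (simp add: dotp_def supnorm_def)

lemma l1_norm_le_of_sqrt_quad_form_le:
  fixes \<delta> d :: "nat \<Rightarrow> real"
  assumes kl: "kl > 0" "kl \<le> ku"
    and rayleigh: "\<And>v. kl * sq_norm p v \<le> quad_form p S v" "\<And>v. quad_form p S v \<le> ku * sq_norm p v"
    and risk: "sqrt (quad_form p S \<delta>) \<le> sqrt (quad_form p S d) + 2 * \<sigma>"
    and l1: "(\<Sum>j<p. \<bar>\<delta> j\<bar>) \<le> D + c * sqrt (sq_norm p \<delta>)"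
    and approx: "D + c * sqrt (sq_norm p d) \<le> E"
    and nonneg: "D \<ge> 0" "c \<ge> 0"
  shows "(\<Sum>j<p. \<bar>\<delta> j\<bar>) \<le> sqrt (ku / kl) * E + c * (2 * \<sigma> / sqrt kl)"
proof -
  have "sqrt kl * sqrt (sq_norm p \<delta>) \<le> sqrt (quad_form p S \<delta>)"
    using rayleigh(1)[of \<delta>] by (metis real_sqrt_le_mono real_sqrt_mult)
  moreover have "sqrt (quad_form p S d) \<le> sqrt ku * sqrt (sq_norm p d)"
    using rayleigh(2)[of d] by (metis real_sqrt_le_mono real_sqrt_mult)
  ultimately have "sqrt kl * sqrt (sq_norm p \<delta>) \<le> sqrt ku * sqrt (sq_norm p d) + 2 * \<sigma>"
    using risk by linarith
  hence "sqrt (sq_norm p \<delta>) \<le> sqrt (ku / kl) * sqrt (sq_norm p d) + 2 * \<sigma> / sqrt kl"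
    using kl by (simp add: pos_le_divide_eq field_simps real_sqrt_divide)
  hence "c * sqrt (sq_norm p \<delta>) \<le> c * (sqrt (ku / kl) * sqrt (sq_norm p d) + 2 * \<sigma> / sqrt kl)"
    using nonneg(2) by (rule mult_left_mono)
  also have "\<dots> = sqrt (ku / kl) * (c * sqrt (sq_norm p d)) + c * (2 * \<sigma> / sqrt kl)"
    by (simp add: algebra_simps)
  finally have "(\<Sum>j<p. \<bar>\<delta> j\<bar>) \<le> D + sqrt (ku / kl) * (c * sqrt (sq_norm p d)) + c * (2 * \<sigma> / sqrt kl)"
    using l1 by linarith
  also have "D + sqrt (ku / kl) * (c * sqrt (sq_norm p d)) \<le> sqrt (ku / kl) * E"
  proof -
    have "1 \<le> sqrt (ku / kl)" using kl by simp
    from mult_right_mono[OF this nonneg(1)] have "D \<le> sqrt (ku / kl) * D" by simp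
    moreover have "sqrt (ku / kl) * (D + c * sqrt (sq_norm p d)) \<le> sqrt (ku / kl) * E"
      using approx \<open>1 \<le> sqrt (ku / kl)\<close> by (intro mult_left_mono) auto
    ultimately show ?thesis by (simp add: algebra_simps)
  qed
  finally show ?thesis by simp
qed

lemma best_sparse_predictor_l1_error:
  fixes x :: "nat \<Rightarrow> 'a \<Rightarrow> nat \<Rightarrow> real" and rho :: "nat \<Rightarrow> 'a \<Rightarrow> real" and m :: nat
  assumes I: "finite I" "I \<noteq> {}" and p: "p \<ge> 1"
    and x: "\<forall>i\<in>I. \<forall>j<p. (\<lambda>\<omega>. x i \<omega> j) \<in> borel_measurable M \<and> integrable M (\<lambda>\<omega>. (x i \<omega> j)\<^sup>2)"
    and rho: "\<forall>i\<in>I. rho i \<in> borel_measurable M \<and> integrable M (\<lambda>\<omega>. (rho i \<omega>)\<^sup>2)"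
    and S: "\<forall>i\<in>I. \<forall>j<p. \<forall>k<p. S j k = (\<integral>\<omega>. x i \<omega> j * x i \<omega> k \<partial>M)"
    and ev: "0 < kl" "\<forall>\<mu>. is_eigenvalue p S \<mu> \<longrightarrow> kl \<le> \<mu> \<and> \<mu> \<le> ku"
    and \<sigma>: "\<sigma> \<ge> 0" "\<forall>i\<in>I. (\<integral>\<omega>. (rho i \<omega>)\<^sup>2 \<partial>M) = \<sigma>\<^sup>2"
    and \<theta>: "\<theta> \<in> smooth_class a A p" "a > 1" "A > 0"
    and \<beta>0: "card {j. j < p \<and> \<beta>0 j \<noteq> 0} \<le> m"
    and opt: "\<forall>\<beta>. (\<forall>j\<ge>p. \<beta> j = 0) \<and> card {j. j < p \<and> \<beta> j \<noteq> 0} \<le> m \<longrightarrow>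
      (\<Sum>i\<in>I. \<integral>\<omega>. (dotp p (x i \<omega>) (\<lambda>j. \<theta> j - \<beta>0 j) + rho i \<omega>)\<^sup>2 \<partial>M)
      \<le> (\<Sum>i\<in>I. \<integral>\<omega>. (dotp p (x i \<omega>) (\<lambda>j. \<theta> j - \<beta> j) + rho i \<omega>)\<^sup>2 \<partial>M)"
  shows "(\<Sum>j<p. \<bar>\<theta> j - \<beta>0 j\<bar>)
    \<le> sqrt (ku / kl) * ((2 * a - 1) / (a - 1) * (A * (real m + 1) powr (1 - a)))
       + sqrt (2 * real m) * (2 * \<sigma> / sqrt kl)"
proof -
  obtain i0 where "i0 \<in> I" using I by blast
  hence "\<forall>j<p. \<forall>k<p. S j k = S k j" using S by (simp add: mult.commute)
  note rayleigh = rayleigh_bounds[OF p this ev(2)]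
  obtain T where T: "T \<subseteq> {..<p}" "card T \<le> m"
    and approx: "(\<Sum>j\<in>{..<p}-T. \<bar>\<theta> j\<bar>) + sqrt (2 * real m) * sqrt (\<Sum>j\<in>{..<p}-T. (\<theta> j)\<^sup>2)
         \<le> (2 * a - 1) / (a - 1) * (A * (real m + 1) powr (1 - a))"
    using smooth_class_sparse_approx[OF \<theta>] by blast
  define \<theta>T where "\<theta>T = (\<lambda>j. if j \<in> T then \<theta> j else 0)"
  have "card {j. j < p \<and> \<theta>T j \<noteq> 0} \<le> card T"
    unfolding \<theta>T_def using T(1) finite_subset[OF T(1)] by (intro card_mono) auto
  hence "card {j. j < p \<and> \<theta>T j \<noteq> 0} \<le> m" using T(2) by linarith
  have "\<forall>j\<ge>p. \<theta>T j = 0" using T(1) unfolding \<theta>T_def by auto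
  have quad_nonneg: "quad_form p S v \<ge> 0" for v
    using rayleigh(1)[of v] ev(1) sq_norm_nonneg[of p v] by (meson mult_nonneg_nonneg order_trans less_imp_le)
  have risk: "sqrt (quad_form p S (\<lambda>j. \<theta> j - \<beta>0 j)) \<le> sqrt (quad_form p S (\<lambda>j. \<theta> j - \<theta>T j)) + 2 * \<sigma>"
    using opt \<open>card {j. j < p \<and> \<theta>T j \<noteq> 0} \<le> m\<close> \<open>\<forall>j\<ge>p. \<theta>T j = 0\<close>
    by (intro sqrt_quad_form_le_of_risk_le[OF I x rho S \<sigma> quad_nonneg quad_nonneg]) blast
  have "sq_norm p (\<lambda>j. \<theta> j - \<theta>T j) = (\<Sum>j\<in>{..<p}-T. (\<theta> j)\<^sup>2)"
    unfolding sq_norm_def \<theta>T_def by (rule sum.mono_neutral_cong_right) auto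
  with approx have "(\<Sum>j\<in>{..<p}-T. \<bar>\<theta> j\<bar>) + sqrt (2 * real m) * sqrt (sq_norm p (\<lambda>j. \<theta> j - \<theta>T j))
      \<le> (2 * a - 1) / (a - 1) * (A * (real m + 1) powr (1 - a))" by simp
  from l1_norm_le_of_sqrt_quad_form_le[OF ev(1) rayleigh(3) rayleigh(1,2) risk
      l1_dist_le_tail_plus_l2[OF T \<beta>0] this]
  show ?thesis by (simp add: sum_nonneg)
qed

lemma sparsity_level_bounds:
  fixes a A s :: real and n :: nat
  assumes a: "a > 1" and A: "A > 0" and n: "n \<ge> 1"
    and s: "s = A powr (1 / a) * real n powr (1 / (2 * a))"
  shows "s > 0" and "real (nat \<lfloor>s\<rfloor>) \<le> s"
    and "A * (real (nat \<lfloor>s\<rfloor>) + 1) powr (1 - a) \<le> sqrt (s\<^sup>2 / real n)"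
proof -
  have np: "real n > 0" using n by simp
  show sp: "s > 0" unfolding s using A np by simp
  thus "real (nat \<lfloor>s\<rfloor>) \<le> s" by linarith
  have "(real (nat \<lfloor>s\<rfloor>) + 1) powr (1 - a) \<le> s powr (1 - a)"
    using a sp by (intro powr_mono2') linarith+
  hence "A * (real (nat \<lfloor>s\<rfloor>) + 1) powr (1 - a) \<le> A * s powr (1 - a)" using A by simp
  also have "A * s powr (1 - a) = s * (A * s powr (- a))"
    using sp by (simp add: powr_diff powr_minus divide_simps)
  also have "A * s powr (- a) = 1 / sqrt (real n)"
  proof -
    have "s powr (- a) = (A powr (1 / a)) powr (- a) * (real n powr (1 / (2 * a))) powr (- a)"
      unfolding s using A np by (simp add: powr_mult)
    also have "\<dots> = A powr (- 1) * real n powr (- (1 / 2))"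
    proof -
      have e: "1 / a * - a = - 1" "1 / (2 * a) * - a = - (1 / 2)" using a by (simp_all add: field_simps)
      show ?thesis unfolding powr_powr e ..
    qed
    finally show ?thesis using A np by (simp add: powr_minus powr_half_sqrt divide_simps)
  qed
  also have "s * (1 / sqrt (real n)) = sqrt (s\<^sup>2 / real n)"
    using sp np by (simp add: real_sqrt_divide)
  finally show "A * (real (nat \<lfloor>s\<rfloor>) + 1) powr (1 - a) \<le> sqrt (s\<^sup>2 / real n)" .
qed

text \<open>With \<open>K = \<kappa>\<^sub>u/\<kappa>\<^sub>l\<close>, the argument only needs \<open>\<surd>K\<close> in front of the approximation
  term and the constant \<open>3\<close> in the noise term; the stated form is weaker.\<close>
lemma l1_error_bound_relax:
  fixes K W V a s \<sigma> kl :: real and m :: nat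
  assumes K: "K \<ge> 1" and W: "0 \<le> W" "W \<le> V" and a: "a > 1"
    and m: "real m \<le> s" and \<sigma>: "\<sigma> \<ge> 0" and kl: "kl > 0"
  shows "sqrt K * ((2 * a - 1) / (a - 1) * W) + sqrt (2 * real m) * (2 * \<sigma> / sqrt kl)
    \<le> K powr (3 / 2) * ((2 * a - 1) / (a - 1) * V + 5 * sqrt (s * \<sigma>\<^sup>2 / kl))"
proof -
  have K32: "K powr (3 / 2) = K * sqrt K"
    using K powr_add[of K 1 "1 / 2"] by (simp add: powr_half_sqrt)
  have "sqrt K \<le> K powr (3 / 2)" and "1 \<le> K powr (3 / 2)"
    unfolding K32 using K mult_mono[of 1 K 1 "sqrt K"] by auto
  have "sqrt 2 \<le> 3 / 2" by (rule real_le_lsqrt) (auto simp: power2_eq_square)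
  moreover have s: "0 \<le> s" using m of_nat_0_le_iff[of m] by linarith
  ultimately have "sqrt 2 * sqrt s \<le> 3 / 2 * sqrt s" by (intro mult_right_mono) auto
  moreover have "sqrt (2 * real m) \<le> sqrt 2 * sqrt s" using m by (simp add: real_sqrt_mult[symmetric])
  ultimately have "sqrt (2 * real m) \<le> 3 / 2 * sqrt s" by linarith
  hence "sqrt (2 * real m) * (2 * \<sigma> / sqrt kl) \<le> 3 / 2 * sqrt s * (2 * \<sigma> / sqrt kl)"
    using \<sigma> kl by (intro mult_right_mono) auto
  also have "\<dots> = 3 * (sqrt s * \<sigma> / sqrt kl)" by simp
  also have "\<dots> \<le> 5 * (sqrt s * \<sigma> / sqrt kl)" using \<sigma> kl s by (intro mult_right_mono) auto
  also have "sqrt s * \<sigma> / sqrt kl = sqrt (s * \<sigma>\<^sup>2 / kl)"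
    using \<sigma> by (simp add: real_sqrt_mult real_sqrt_divide)
  also have "5 * sqrt (s * \<sigma>\<^sup>2 / kl) \<le> K powr (3 / 2) * (5 * sqrt (s * \<sigma>\<^sup>2 / kl))"
    using mult_right_mono[OF \<open>1 \<le> K powr (3 / 2)\<close>, of "5 * sqrt (s * \<sigma>\<^sup>2 / kl)"] s kl by simp
  finally have noise: "sqrt (2 * real m) * (2 * \<sigma> / sqrt kl) \<le> K powr (3 / 2) * (5 * sqrt (s * \<sigma>\<^sup>2 / kl))" .
  have "(2 * a - 1) / (a - 1) * W \<le> (2 * a - 1) / (a - 1) * V" using a W by (intro mult_left_mono) auto
  hence "sqrt K * ((2 * a - 1) / (a - 1) * W) \<le> sqrt K * ((2 * a - 1) / (a - 1) * V)"
    by (rule mult_left_mono) (use K in simp)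
  also have "\<dots> \<le> K powr (3 / 2) * ((2 * a - 1) / (a - 1) * V)"
    using \<open>sqrt K \<le> K powr (3 / 2)\<close> a W by (intro mult_right_mono) auto
  finally show ?thesis using noise by (simp add: distrib_left)
qed

lemma supnorm_nonneg: "supnorm p u \<ge> 0"
proof (cases "p = 0")
  case False
  hence "\<bar>u 0\<bar> \<le> (MAX j\<in>{..<p}. \<bar>u j\<bar>)" by (intro Max_ge) auto
  hence "0 \<le> (MAX j\<in>{..<p}. \<bar>u j\<bar>)" by linarith
  thus ?thesis using False by (simp add: supnorm_def)
qed (simp add: supnorm_def)

lemma abs_dotp_add_le:
  assumes "(\<Sum>j<p. \<bar>v j\<bar>) \<le> B"
  shows "\<bar>dotp p u v + r\<bar> \<le> supnorm p u * B + \<bar>r\<bar>"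
proof -
  have "\<bar>dotp p u v\<bar> \<le> supnorm p u * B"
    using abs_dotp_le_supnorm[of p u v] mult_left_mono[OF assms supnorm_nonneg[of p u]] by linarith
  thus ?thesis using abs_triangle_ineq[of "dotp p u v" r] by linarith
qed

theorem lemma2:
  fixes M :: "'w measure"
    and x :: "nat \<Rightarrow> 'w \<Rightarrow> nat \<Rightarrow> real"
    and rho h :: "nat \<Rightarrow> 'w \<Rightarrow> real"
    and \<theta> \<beta>0 :: "nat \<Rightarrow> real"
    and S :: "nat \<Rightarrow> nat \<Rightarrow> real"
    and n p :: nat
    and a A kl ku s :: real
  assumes "prob_space M"
    and "n \<ge> 1"
    and "\<forall>i\<in>{1..n}. \<forall>j<p. (\<lambda>\<omega>. x i \<omega> j) \<in> borel_measurable M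
                          \<and> integrable M (\<lambda>\<omega>. (x i \<omega> j)\<^sup>2)"
    and "\<forall>i\<in>{1..n}. rho i \<in> borel_measurable M \<and> integrable M (\<lambda>\<omega>. (rho i \<omega>)\<^sup>2)"
    and "\<forall>i\<in>{1..n}. \<forall>j<p. \<forall>k<p. S j k = (\<integral>\<omega>. x i \<omega> j * x i \<omega> k \<partial>M)"
    and "0 < kl"
    and "\<forall>\<mu>. is_eigenvalue p S \<mu> \<longrightarrow> kl \<le> \<mu> \<and> \<mu> \<le> ku"
    and "\<forall>i\<in>{1..n}. \<forall>\<omega>. h i \<omega> = dotp p (x i \<omega>) \<theta> + rho i \<omega>"
    and "a > 1" and "A > 0"
    and "\<theta> \<in> smooth_class a A p"
    and "\<forall>i\<in>{1..n}. \<forall>i'\<in>{1..n}.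
           (\<integral>\<omega>. (rho i \<omega>)\<^sup>2 \<partial>M) = (\<integral>\<omega>. (rho i' \<omega>)\<^sup>2 \<partial>M)"
    and "s = A powr (1 / a) * real n powr (1 / (2 * a))"
    and "\<forall>j\<ge>p. \<beta>0 j = 0"
    and "real (l0norm p \<beta>0) \<le> s"
    and "\<forall>\<beta>. (\<forall>j\<ge>p. \<beta> j = 0) \<and> real (l0norm p \<beta>) \<le> s \<longrightarrow>
           (1 / real n) * (\<Sum>i=1..n. \<integral>\<omega>. (h i \<omega> - dotp p (x i \<omega>) \<beta>0)\<^sup>2 \<partial>M)
           \<le> (1 / real n) * (\<Sum>i=1..n. \<integral>\<omega>. (h i \<omega> - dotp p (x i \<omega>) \<beta>)\<^sup>2 \<partial>M)"
  shows "\<forall>i\<in>{1..n}. \<forall>\<omega>\<in>space M.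
           \<bar>h i \<omega> - dotp p (x i \<omega>) \<beta>0\<bar>
           \<le> supnorm p (x i \<omega>) * (ku / kl) powr (3 / 2) *
               ((2 * a - 1) / (a - 1) * sqrt (s\<^sup>2 / real n)
                + 5 * sqrt (s * (\<integral>\<omega>'. (rho i \<omega>')\<^sup>2 \<partial>M) / kl))
             + \<bar>rho i \<omega>\<bar>"
proof (intro ballI)
  fix i \<omega> assume i: "i \<in> {1..n}" and "\<omega> \<in> space M"
  define m where "m = nat \<lfloor>s\<rfloor>"
  define \<sigma> where "\<sigma> = sqrt (\<integral>\<omega>'. (rho i \<omega>')\<^sup>2 \<partial>M)"
  have \<sigma>: "\<sigma> \<ge> 0" "\<sigma>\<^sup>2 = (\<integral>\<omega>'. (rho i \<omega>')\<^sup>2 \<partial>M)"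
    unfolding \<sigma>_def by (simp_all add: integral_nonneg_AE)
  have resid: "h i' \<omega>' - dotp p (x i' \<omega>') \<beta> = dotp p (x i' \<omega>') (\<lambda>j. \<theta> j - \<beta> j) + rho i' \<omega>'"
    if "i' \<in> {1..n}" for i' \<omega>' \<beta>
    using assms(8) that dotp_diff[of p "x i' \<omega>'" \<theta> \<beta>] by (simp add: algebra_simps)
  note s = sparsity_level_bounds[OF assms(9,10,2,13), folded m_def]
  have l1: "(\<Sum>j<p. \<bar>\<theta> j - \<beta>0 j\<bar>)
    \<le> (ku / kl) powr (3 / 2) * ((2 * a - 1) / (a - 1) * sqrt (s\<^sup>2 / real n) + 5 * sqrt (s * \<sigma>\<^sup>2 / kl))"
  proof (cases "p = 0")
    case True
    thus ?thesis using assms(6,9) s(1) by (simp add: add_nonneg_nonneg)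
  next
    case False
    have sparse_iff: "real (l0norm p \<beta>) \<le> s \<longleftrightarrow> card {j. j < p \<and> \<beta> j \<noteq> 0} \<le> m" for \<beta>
      using s(1) by (simp add: l0norm_def m_def le_nat_iff le_floor_iff)
    moreover have "(\<Sum>i=1..n. \<integral>\<omega>. (h i \<omega> - dotp p (x i \<omega>) \<beta>)\<^sup>2 \<partial>M)
        = (\<Sum>i=1..n. \<integral>\<omega>. (dotp p (x i \<omega>) (\<lambda>j. \<theta> j - \<beta> j) + rho i \<omega>)\<^sup>2 \<partial>M)" for \<beta>
      by (intro sum.cong refl) (simp add: resid)
    ultimately have opt: "\<forall>\<beta>. (\<forall>j\<ge>p. \<beta> j = 0) \<and> card {j. j < p \<and> \<beta> j \<noteq> 0} \<le> m \<longrightarrow>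
      (\<Sum>i=1..n. \<integral>\<omega>. (dotp p (x i \<omega>) (\<lambda>j. \<theta> j - \<beta>0 j) + rho i \<omega>)\<^sup>2 \<partial>M)
      \<le> (\<Sum>i=1..n. \<integral>\<omega>. (dotp p (x i \<omega>) (\<lambda>j. \<theta> j - \<beta> j) + rho i \<omega>)\<^sup>2 \<partial>M)"
      using assms(2,16) by (simp add: divide_le_cancel)
    have "card {j. j < p \<and> \<beta>0 j \<noteq> 0} \<le> m" using assms(15) sparse_iff by simp
    moreover have "\<forall>i'\<in>{1..n}. (\<integral>\<omega>. (rho i' \<omega>)\<^sup>2 \<partial>M) = \<sigma>\<^sup>2"
      using assms(12) i unfolding \<sigma>(2) by blast
    moreover have "{1..n} \<noteq> {}" "p \<ge> 1" using assms(2) False by auto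
    ultimately have "(\<Sum>j<p. \<bar>\<theta> j - \<beta>0 j\<bar>)
      \<le> sqrt (ku / kl) * ((2 * a - 1) / (a - 1) * (A * (real m + 1) powr (1 - a)))
         + sqrt (2 * real m) * (2 * \<sigma> / sqrt kl)"
      using best_sparse_predictor_l1_error[OF finite_atLeastAtMost _ _ assms(3,4,5,6,7) \<sigma>(1) _ assms(11,9,10) _ opt]
      by blast
    also have "\<dots> \<le> (ku / kl) powr (3 / 2) * ((2 * a - 1) / (a - 1) * sqrt (s\<^sup>2 / real n) + 5 * sqrt (s * \<sigma>\<^sup>2 / kl))"
    proof (rule l1_error_bound_relax[OF _ _ s(3) assms(9) s(2) \<sigma>(1) assms(6)])
      have "\<forall>j<p. \<forall>k<p. S j k = S k j" using assms(5) i by (simp add: mult.commute)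
      hence "kl \<le> ku" using rayleigh_bounds(3)[OF \<open>p \<ge> 1\<close> _ assms(7)] by blast
      thus "1 \<le> ku / kl" using assms(6) by simp
      show "0 \<le> A * (real m + 1) powr (1 - a)" using assms(10) by simp
    qed
    finally show ?thesis .
  qed
  from abs_dotp_add_le[OF l1] show "\<bar>h i \<omega> - dotp p (x i \<omega>) \<beta>0\<bar>
           \<le> supnorm p (x i \<omega>) * (ku / kl) powr (3 / 2) *
               ((2 * a - 1) / (a - 1) * sqrt (s\<^sup>2 / real n)
                + 5 * sqrt (s * (\<integral>\<omega>'. (rho i \<omega>')\<^sup>2 \<partial>M) / kl))
             + \<bar>rho i \<omega>\<bar>"
    unfolding resid[OF i] \<sigma>(2) by (simp only: mult.assoc)
qed

end
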